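(* Let $X=\ell_p$ for some $1\le p<\infty$, or $X=c_0$, considered as a Banach algebra under coordinatewise multiplication. Let $x_0\in X$, $m\in\mathbb N$, and $\lambda\in\mathbb C$ with $|\lambda|>1$. If $x_0^m$ is frequently hypercyclic for $\lambda B$, then so is $\sum_{\nu=m}^N\alpha_\nu x_0^\nu$ for any $N\ge m$ and any $\alpha_m,\ldots,\alpha_N\in\mathbb C$ with $\alpha_m\ne0$.
   Context: $\lambda B(x(1),x(2),x(3),\ldots)=(\lambda x(2),\lambda x(3),\ldots)$; powers are coordinatewise. A vector $x$ is frequently hypercyclic for $T$ if for every non-empty open $U\subset X$ the set $\{n\in\mathbb N_0:T^nx\in U\}$ has positive lower density, where the lower density of $A\subset\mathbb N_0$ is $\liminf_{N\to\infty}\frac{\mathrm{card}(A\cap[0,N])}{N+1}$. *)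

theory Defs
  imports "HOL-Analysis.Analysis" "HOL-Library.Extended_Real"
begin

text \<open>Sequence spaces of complex sequences indexed by nat (coordinates x(1),x(2),... are x 0, x 1, ...).\<close>

definition lp_space :: "real \<Rightarrow> (nat \<Rightarrow> complex) set" where
  "lp_space p = {x. summable (\<lambda>n. cmod (x n) powr p)}"

definition lp_dist :: "real \<Rightarrow> (nat \<Rightarrow> complex) \<Rightarrow> (nat \<Rightarrow> complex) \<Rightarrow> real" where
  "lp_dist p x y = (\<Sum>n. cmod (x n - y n) powr p) powr (1 / p)"

definition c0_space :: "(nat \<Rightarrow> complex) set" where
  "c0_space = {x. x \<longlonglongrightarrow> 0}"

definition c0_dist :: "(nat \<Rightarrow> complex) \<Rightarrow> (nat \<Rightarrow> complex) \<Rightarrow> real" where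
  "c0_dist x y = (SUP n. cmod (x n - y n))"

definition open_in_metric :: "'a set \<Rightarrow> ('a \<Rightarrow> 'a \<Rightarrow> real) \<Rightarrow> 'a set \<Rightarrow> bool" where
  "open_in_metric X d U \<longleftrightarrow> U \<subseteq> X \<and> (\<forall>y\<in>U. \<exists>e>0. \<forall>z\<in>X. d y z < e \<longrightarrow> z \<in> U)"

definition lower_density :: "nat set \<Rightarrow> ereal" where
  "lower_density A = liminf (\<lambda>N. ereal (real (card (A \<inter> {0..N})) / real (N + 1)))"

definition freq_hypercyclic ::
  "'a set \<Rightarrow> ('a \<Rightarrow> 'a \<Rightarrow> real) \<Rightarrow> ('a \<Rightarrow> 'a) \<Rightarrow> 'a \<Rightarrow> bool" where
  "freq_hypercyclic X d T x \<longleftrightarrow> x \<in> X \<and>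
     (\<forall>U. open_in_metric X d U \<and> U \<noteq> {} \<longrightarrow> lower_density {n. (T ^^ n) x \<in> U} > 0)"

definition scaled_shift :: "complex \<Rightarrow> (nat \<Rightarrow> complex) \<Rightarrow> (nat \<Rightarrow> complex)" where
  "scaled_shift c x = (\<lambda>n. c * x (Suc n))"

end

theory Submission
  imports Defs
begin

text \<open>
  Write \<open>y = x\<^sub>0\<^sup>m\<close> and \<open>g = \<Sum>\<^sub>\<nu> \<alpha>\<^sub>\<nu> x\<^sub>0\<^sup>\<nu>\<^sup>-\<^sup>m\<close>. The new vector is the coordinatewise product
  \<open>g y\<close>, and \<open>g\<close> tends to \<open>\<alpha>\<^sub>m \<noteq> 0\<close> because \<open>x\<^sub>0\<close> tends to 0. The \<open>n\<close>-th iterate of the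
  scaled shift maps \<open>g y\<close> to \<open>g(n + \<cdot>)\<close> times the \<open>n\<close>-th iterate of \<open>y\<close>, so in any solid
  sequence space (such as \<open>l\<^sub>p\<close> and \<open>c\<^sub>0\<close>) its distance to \<open>\<alpha>\<^sub>m\<close> times the \<open>n\<close>-th iterate of \<open>y\<close> is
  at most \<open>sup\<^sub>j\<^sub>\<ge>\<^sub>n |g j - \<alpha>\<^sub>m|\<close> times the norm of the latter. Hence, for all but finitely
  many \<open>n\<close>, a visit of the orbit of \<open>y\<close> to a small ball around \<open>v\<close> is a visit of the orbit of
  \<open>g y\<close> to a given ball around \<open>\<alpha>\<^sub>m v\<close>, and discarding finitely many times does not change
  lower density.
\<close>

lemma lower_density_mono_eventually:
  assumes "A \<inter> {n0..} \<subseteq> B"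
  shows "lower_density A \<le> lower_density B"
proof -
  have card_le: "real (card (A \<inter> {0..N})) \<le> real n0 + real (card (B \<inter> {0..N}))" for N
  proof -
    have "A \<inter> {0..N} \<subseteq> {..<n0} \<union> (B \<inter> {0..N})" using assms by auto
    then have "card (A \<inter> {0..N}) \<le> card ({..<n0} \<union> (B \<inter> {0..N}))" by (intro card_mono) auto
    also have "\<dots> \<le> n0 + card (B \<inter> {0..N})" using card_Un_le[of "{..<n0}"] by simp
    finally show ?thesis by linarith
  qed
  have "(\<lambda>N. real n0 / real (N + 1)) \<longlonglongrightarrow> 0"
    using LIMSEQ_Suc[OF lim_const_over_n[of "real n0"]] by simp
  then have lim: "(\<lambda>N. ereal (real n0 / real (N + 1))) \<longlonglongrightarrow> 0"
    by (simp add: zero_ereal_def)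
  have "lower_density A
      \<le> liminf (\<lambda>N. ereal (real n0 / real (N + 1)) + ereal (real (card (B \<inter> {0..N})) / real (N + 1)))"
    unfolding lower_density_def
    by (intro Liminf_mono always_eventually allI)
       (use card_le in \<open>simp add: add_divide_distrib[symmetric] divide_right_mono\<close>)
  also have "\<dots> = lower_density B"
    unfolding lower_density_def by (subst ereal_liminf_lim_add[OF lim]) simp_all
  finally show ?thesis .
qed

lemma funpow_scaled_shift: "(scaled_shift c ^^ n) x = (\<lambda>k. c ^ n * x (n + k))"
  by (induction n) (auto simp: scaled_shift_def)

lemma sum_powers_factor:
  fixes z :: "'a::comm_semiring_1"
  shows "(\<Sum>\<nu>=m..N. \<alpha> \<nu> * z ^ \<nu>) = (\<Sum>\<nu>=m..N. \<alpha> \<nu> * z ^ (\<nu> - m)) * z ^ m"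
  unfolding sum_distrib_right
  by (intro sum.cong refl) (auto simp: mult.assoc simp flip: power_add)

lemma tendsto_sum_powers_zero:
  fixes f :: "'a \<Rightarrow> 'b::real_normed_algebra_1"
  assumes "(f \<longlongrightarrow> 0) F" "m \<le> N"
  shows "((\<lambda>t. \<Sum>\<nu>=m..N. \<alpha> \<nu> * f t ^ (\<nu> - m)) \<longlongrightarrow> \<alpha> m) F"
proof -
  have "((\<lambda>t. \<Sum>\<nu>=m..N. \<alpha> \<nu> * f t ^ (\<nu> - m)) \<longlongrightarrow> (\<Sum>\<nu>=m..N. \<alpha> \<nu> * 0 ^ (\<nu> - m))) F"
    by (intro tendsto_intros assms(1))
  also have "(\<Sum>\<nu>=m..N. \<alpha> \<nu> * 0 ^ (\<nu> - m)) = (\<Sum>\<nu>=m..N. if \<nu> = m then \<alpha> m else 0)"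
    by (intro sum.cong) (auto simp: power_0_left)
  finally show ?thesis using assms(2) by simp
qed

locale solid_sequence_space =
  fixes X :: "(nat \<Rightarrow> complex) set" and nrm :: "(nat \<Rightarrow> complex) \<Rightarrow> real"
  assumes zero_mem: "(\<lambda>k. 0) \<in> X"
    and add_mem: "x \<in> X \<Longrightarrow> y \<in> X \<Longrightarrow> (\<lambda>k. x k + y k) \<in> X"
    and scale_mem: "x \<in> X \<Longrightarrow> (\<lambda>k. a * x k) \<in> X"
    and solid_mem: "y \<in> X \<Longrightarrow> (\<And>k. cmod (x k) \<le> cmod (y k)) \<Longrightarrow> x \<in> X"
    and solid_nrm: "y \<in> X \<Longrightarrow> (\<And>k. cmod (x k) \<le> cmod (y k)) \<Longrightarrow> nrm x \<le> nrm y"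
    and nrm_triangle: "x \<in> X \<Longrightarrow> y \<in> X \<Longrightarrow> nrm (\<lambda>k. x k + y k) \<le> nrm x + nrm y"
    and nrm_scale: "x \<in> X \<Longrightarrow> nrm (\<lambda>k. a * x k) = cmod a * nrm x"
begin

abbreviation ndist :: "(nat \<Rightarrow> complex) \<Rightarrow> (nat \<Rightarrow> complex) \<Rightarrow> real" where
  "ndist x y \<equiv> nrm (\<lambda>k. x k - y k)"

lemma diff_mem: "x \<in> X \<Longrightarrow> y \<in> X \<Longrightarrow> (\<lambda>k. x k - y k) \<in> X"
  using add_mem[of x "\<lambda>k. -1 * y k"] scale_mem[of y "-1"] by simp

lemma nrm_zero: "nrm (\<lambda>k. 0) = 0"
  using nrm_scale[OF zero_mem, of 0] by simp

lemma nrm_nonneg: "x \<in> X \<Longrightarrow> 0 \<le> nrm x"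
  using nrm_triangle[of x "\<lambda>k. -1 * x k"] nrm_scale[of x "-1"] scale_mem[of x "-1"] nrm_zero
  by simp

lemma ndist_commute: "x \<in> X \<Longrightarrow> y \<in> X \<Longrightarrow> ndist x y = ndist y x"
  using nrm_scale[OF diff_mem, of x y "-1"] by simp

lemma ndist_triangle: "x \<in> X \<Longrightarrow> y \<in> X \<Longrightarrow> z \<in> X \<Longrightarrow> ndist x z \<le> ndist x y + ndist y z"
  using nrm_triangle[OF diff_mem diff_mem, of x y y z] by simp

lemma ndist_scale: "x \<in> X \<Longrightarrow> y \<in> X \<Longrightarrow> ndist (\<lambda>k. a * x k) (\<lambda>k. a * y k) = cmod a * ndist x y"
  using nrm_scale[OF diff_mem, of x y a] by (simp add: algebra_simps)

lemma nrm_le_add_ndist: "x \<in> X \<Longrightarrow> y \<in> X \<Longrightarrow> nrm y \<le> nrm x + ndist x y"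
  using nrm_triangle[of x "\<lambda>k. y k - x k"] diff_mem[of y x] ndist_commute[of x y] by simp

lemma open_in_metric_ball: "v \<in> X \<Longrightarrow> open_in_metric X ndist {w \<in> X. ndist v w < r}"
  unfolding open_in_metric_def
proof (intro conjI ballI)
  fix w assume v: "v \<in> X" and w: "w \<in> {w \<in> X. ndist v w < r}"
  have "z \<in> {w \<in> X. ndist v w < r}" if "z \<in> X" "ndist w z < r - ndist v w" for z
    using that w ndist_triangle[OF v, of w z] by auto
  then show "\<exists>e>0. \<forall>z\<in>X. ndist w z < e \<longrightarrow> z \<in> {w \<in> X. ndist v w < r}"
    using w by (intro exI[of _ "r - ndist v w"]) auto
qed auto

lemma mult_bounded_mem:
  assumes "a \<in> X" "\<And>k. cmod (g k) \<le> B"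
  shows "(\<lambda>k. g k * a k) \<in> X"
proof -
  have "B \<ge> 0" using assms(2)[of 0] norm_ge_zero order_trans by blast
  have "cmod (g k * a k) \<le> cmod (of_real B * a k)" for k
    using assms(2)[of k] \<open>B \<ge> 0\<close> by (simp add: norm_mult mult_right_mono)
  then show ?thesis by (rule solid_mem[OF scale_mem[OF assms(1)]])
qed

lemma nrm_mult_bounded_le:
  assumes "a \<in> X" "\<And>k. cmod (g k) \<le> B"
  shows "nrm (\<lambda>k. g k * a k) \<le> B * nrm a"
proof -
  have "B \<ge> 0" using assms(2)[of 0] norm_ge_zero order_trans by blast
  have "cmod (g k * a k) \<le> cmod (of_real B * a k)" for k
    using assms(2)[of k] \<open>B \<ge> 0\<close> by (simp add: norm_mult mult_right_mono)
  then have "nrm (\<lambda>k. g k * a k) \<le> nrm (\<lambda>k. of_real B * a k)"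
    by (rule solid_nrm[OF scale_mem[OF assms(1)]])
  also have "\<dots> = B * nrm a" using \<open>B \<ge> 0\<close> nrm_scale[OF assms(1)] by simp
  finally show ?thesis .
qed

lemma ndist_mult_near_const:
  assumes a: "a \<in> X" and h: "\<And>k. cmod (h k - \<alpha>) \<le> \<eta>"
  shows "(\<lambda>k. h k * a k) \<in> X" and "ndist (\<lambda>k. \<alpha> * a k) (\<lambda>k. h k * a k) \<le> \<eta> * nrm a"
proof -
  have "(\<lambda>k. \<alpha> * a k + (h k - \<alpha>) * a k) \<in> X"
    using add_mem[OF scale_mem[OF a] mult_bounded_mem[of a "\<lambda>k. h k - \<alpha>", OF a h]] .
  then show "(\<lambda>k. h k * a k) \<in> X"
    by (simp add: algebra_simps)
  have "cmod (\<alpha> - h k) \<le> \<eta>" for k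
    using h[of k] by (simp add: norm_minus_commute)
  then show "ndist (\<lambda>k. \<alpha> * a k) (\<lambda>k. h k * a k) \<le> \<eta> * nrm a"
    using nrm_mult_bounded_le[of a "\<lambda>k. \<alpha> - h k", OF a] by (simp add: algebra_simps)
qed

lemma ndist_scale_mult_near_const:
  assumes vX: "v \<in> X" and aX: "a \<in> X" and va: "ndist v a \<le> \<delta>"
    and h: "\<And>k. cmod (h k - \<alpha>) \<le> \<eta>" and "0 \<le> \<eta>"
  shows "ndist (\<lambda>k. \<alpha> * v k) (\<lambda>k. h k * a k) \<le> cmod \<alpha> * \<delta> + \<eta> * (nrm v + \<delta>)"
proof -
  note near = ndist_mult_near_const[OF aX h]
  have "ndist (\<lambda>k. \<alpha> * v k) (\<lambda>k. h k * a k)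
      \<le> ndist (\<lambda>k. \<alpha> * v k) (\<lambda>k. \<alpha> * a k) + ndist (\<lambda>k. \<alpha> * a k) (\<lambda>k. h k * a k)"
    using ndist_triangle[OF scale_mem[OF vX] scale_mem[OF aX] near(1)] .
  also have "\<dots> \<le> cmod \<alpha> * \<delta> + \<eta> * (nrm v + \<delta>)"
  proof (rule add_mono)
    show "ndist (\<lambda>k. \<alpha> * v k) (\<lambda>k. \<alpha> * a k) \<le> cmod \<alpha> * \<delta>"
      using ndist_scale[OF vX aX, of \<alpha>] va by (simp add: mult_left_mono)
    have "nrm a \<le> nrm v + \<delta>" using nrm_le_add_ndist[OF vX aX] va by simp
    then show "ndist (\<lambda>k. \<alpha> * a k) (\<lambda>k. h k * a k) \<le> \<eta> * (nrm v + \<delta>)"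
      using near(2) \<open>0 \<le> \<eta>\<close> by (meson mult_left_mono order_trans)
  qed
  finally show ?thesis .
qed

theorem freq_hypercyclic_mult_convergent:
  assumes fhc: "freq_hypercyclic X ndist (scaled_shift c) y"
    and g: "g \<longlonglongrightarrow> \<alpha>" and \<alpha>: "\<alpha> \<noteq> 0"
  shows "freq_hypercyclic X ndist (scaled_shift c) (\<lambda>k. g k * y k)"
  unfolding freq_hypercyclic_def
proof (intro conjI allI impI)
  let ?T = "scaled_shift c"
  have yX: "y \<in> X" using fhc by (simp add: freq_hypercyclic_def)
  obtain G where "\<And>k. cmod (g k) \<le> G"
    using convergent_imp_Bseq[OF convergentI[OF g]] by (auto simp: Bseq_def)
  then show "(\<lambda>k. g k * y k) \<in> X" by (rule mult_bounded_mem[OF yX])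
  fix U assume "open_in_metric X ndist U \<and> U \<noteq> {}"
  then obtain u e where uX: "u \<in> X" and "e > 0" and ball_U: "\<And>w. w \<in> X \<Longrightarrow> ndist u w < e \<Longrightarrow> w \<in> U"
    unfolding open_in_metric_def by blast
  define v where "v = (\<lambda>k. u k / \<alpha>)"
  define \<delta> where "\<delta> = e / (2 * cmod \<alpha>)"
  define \<eta> where "\<eta> = e / (4 * (nrm v + \<delta>))"
  define V where "V = {w \<in> X. ndist v w < \<delta>}"
  have vX: "v \<in> X" using scale_mem[OF uX, of "1 / \<alpha>"] by (simp add: v_def)
  have u_eq: "u = (\<lambda>k. \<alpha> * v k)" using \<alpha> by (simp add: v_def)
  have "\<delta> > 0" using \<open>e > 0\<close> \<alpha> by (simp add: \<delta>_def)
  then have dens_V: "lower_density {n. (?T ^^ n) y \<in> V} > 0"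
    using fhc open_in_metric_ball[OF vX] vX nrm_zero unfolding freq_hypercyclic_def V_def by force
  have "\<eta> > 0"
    using \<open>e > 0\<close> \<open>\<delta> > 0\<close> nrm_nonneg[OF vX] by (simp add: \<eta>_def)
  then obtain n0 where n0: "\<And>j. j \<ge> n0 \<Longrightarrow> cmod (g j - \<alpha>) \<le> \<eta>"
    using g unfolding LIMSEQ_def dist_norm by (meson less_imp_le)
  have "cmod \<alpha> * \<delta> = e / 2" using \<alpha> by (simp add: \<delta>_def)
  moreover have "\<eta> * (nrm v + \<delta>) = e / 4"
    using \<open>\<delta> > 0\<close> nrm_nonneg[OF vX] by (simp add: \<eta>_def field_simps)
  ultimately have error: "cmod \<alpha> * \<delta> + \<eta> * (nrm v + \<delta>) < e"
    using \<open>e > 0\<close> by simp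
  have "{n. (?T ^^ n) y \<in> V} \<inter> {n0..} \<subseteq> {n. (?T ^^ n) (\<lambda>k. g k * y k) \<in> U}"
  proof safe
    fix n assume "(?T ^^ n) y \<in> V" "n \<ge> n0"
    define a where "a = (?T ^^ n) y"
    have aX: "a \<in> X" and "ndist v a \<le> \<delta>" using \<open>(?T ^^ n) y \<in> V\<close> by (auto simp: a_def V_def)
    have iter: "(?T ^^ n) (\<lambda>k. g k * y k) = (\<lambda>k. g (n + k) * a k)"
      by (simp add: funpow_scaled_shift a_def mult.left_commute)
    have g_near: "\<And>k. cmod (g (n + k) - \<alpha>) \<le> \<eta>" using n0 \<open>n \<ge> n0\<close> by simp
    have "ndist u (\<lambda>k. g (n + k) * a k) < e"
      using ndist_scale_mult_near_const[where h = "\<lambda>k. g (n + k)", OF vX aX \<open>ndist v a \<le> \<delta>\<close> g_near] \<open>\<eta> > 0\<close> error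
      by (simp add: u_eq)
    then show "(?T ^^ n) (\<lambda>k. g k * y k) \<in> U"
      unfolding iter using ball_U ndist_mult_near_const(1)[where h = "\<lambda>k. g (n + k)", OF aX g_near] by blast
  qed
  then show "lower_density {n. (?T ^^ n) (\<lambda>k. g k * y k) \<in> U} > 0"
    using lower_density_mono_eventually dens_V by (meson less_le_trans)
qed

corollary freq_hypercyclic_sum_powers:
  assumes fhc: "freq_hypercyclic X ndist (scaled_shift c) (\<lambda>k. x0 k ^ m)"
    and "x0 \<longlonglongrightarrow> 0" "m \<le> N" "\<alpha> m \<noteq> 0"
  shows "freq_hypercyclic X ndist (scaled_shift c) (\<lambda>k. \<Sum>\<nu>=m..N. \<alpha> \<nu> * x0 k ^ \<nu>)"
proof -
  have "freq_hypercyclic X ndist (scaled_shift c)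
      (\<lambda>k. (\<Sum>\<nu>=m..N. \<alpha> \<nu> * x0 k ^ (\<nu> - m)) * x0 k ^ m)"
    by (rule freq_hypercyclic_mult_convergent[OF fhc tendsto_sum_powers_zero[where \<alpha> = \<alpha>, OF assms(2,3)] assms(4)])
  then show ?thesis by (simp only: sum_powers_factor)
qed

end

lemma convex_on_powr_nonneg: "1 \<le> p \<Longrightarrow> convex_on {0..} (\<lambda>x::real. x powr p)"
proof (rule convex_on_linorderI)
  fix t x y :: real
  assume p: "1 \<le> p" and t: "0 < t" "t < 1" and xy: "x \<in> {0..}" "y \<in> {0..}" "x < y"
  show "((1 - t) *\<^sub>R x + t *\<^sub>R y) powr p \<le> (1 - t) * x powr p + t * y powr p"
  proof (cases "x = 0")
    case True
    have "t powr p \<le> t powr 1" using t p by (intro powr_mono') auto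
    then have "(t * y) powr p \<le> t * y powr p"
      using t xy by (simp add: powr_mult mult_right_mono)
    then show ?thesis using True by simp
  next
    case False
    then show ?thesis
      using convex_onD[OF powr_convex[OF p], of t x y] t xy by simp
  qed
qed simp

lemma powr_add_le_convex_combination:
  fixes a b A B p :: real
  assumes p: "1 \<le> p" and ab: "0 \<le> a" "0 \<le> b" and AB: "0 < A" "0 < B"
  shows "(a + b) powr p \<le> (A + B) powr p * (A / (A + B) * (a / A) powr p + B / (A + B) * (b / B) powr p)"
proof -
  have weights: "1 - B / (A + B) = A / (A + B)"
    using AB by (simp add: field_simps)
  have "A / (A + B) * (a / A) + B / (A + B) * (b / B) = a / (A + B) + b / (A + B)"
    using AB by simp
  then have "A / (A + B) * (a / A) + B / (A + B) * (b / B) = (a + b) / (A + B)"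
    by (simp only: add_divide_distrib)
  then have "(a + b) powr p = (A + B) powr p * ((1 - B / (A + B)) * (a / A) + B / (A + B) * (b / B)) powr p"
    using AB ab by (simp add: weights powr_mult[symmetric])
  also have "\<dots> \<le> (A + B) powr p * ((1 - B / (A + B)) * (a / A) powr p + B / (A + B) * (b / B) powr p)"
    using AB ab by (intro mult_left_mono convex_onD[OF convex_on_powr_nonneg[OF p], simplified]) auto
  finally show ?thesis by (simp only: weights)
qed

definition lp_norm :: "real \<Rightarrow> (nat \<Rightarrow> complex) \<Rightarrow> real" where
  "lp_norm p x = (\<Sum>n. cmod (x n) powr p) powr (1 / p)"

lemma lp_dist_eq: "lp_dist p x y = lp_norm p (\<lambda>k. x k - y k)"
  by (simp add: lp_dist_def lp_norm_def)

lemma lp_norm_nonneg: "0 \<le> lp_norm p x"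
  by (simp add: lp_norm_def)

lemma lp_norm_powr:
  assumes "0 < p" "x \<in> lp_space p"
  shows "lp_norm p x powr p = (\<Sum>n. cmod (x n) powr p)"
  using assms suminf_nonneg[of "\<lambda>n. cmod (x n) powr p"]
  by (simp add: lp_norm_def lp_space_def powr_powr)

lemma lp_normalized_sums:
  assumes p: "1 \<le> p" and x: "x \<in> lp_space p" and C: "0 < C" "lp_norm p x \<le> C"
  obtains s where "(\<lambda>n. (cmod (x n) / C) powr p) sums s" and "s \<le> 1"
proof
  show "(\<lambda>n. (cmod (x n) / C) powr p) sums ((\<Sum>n. cmod (x n) powr p) / C powr p)"
    using x C by (simp add: lp_space_def powr_divide summable_sums sums_divide)
  have "(\<Sum>n. cmod (x n) powr p) = lp_norm p x powr p"
    using p lp_norm_powr[OF _ x] by simp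
  also have "\<dots> \<le> C powr p"
    using C p lp_norm_nonneg by (intro powr_mono2) auto
  finally show "(\<Sum>n. cmod (x n) powr p) / C powr p \<le> 1" using C by simp
qed

text \<open>Minkowski's inequality via convexity of \<open>t powr p\<close>; arbitrary positive bounds \<open>A\<close>, \<open>B\<close>
  in place of the norms avoid the degenerate case of a zero norm.\<close>

lemma lp_minkowski_bounds:
  assumes p: "1 \<le> p" and x: "x \<in> lp_space p" and y: "y \<in> lp_space p"
    and A: "0 < A" "lp_norm p x \<le> A" and B: "0 < B" "lp_norm p y \<le> B"
  shows "(\<lambda>k. x k + y k) \<in> lp_space p" and "lp_norm p (\<lambda>k. x k + y k) \<le> A + B"
proof -
  obtain sx sy where sx: "(\<lambda>n. (cmod (x n) / A) powr p) sums sx" "sx \<le> 1"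
    and sy: "(\<lambda>n. (cmod (y n) / B) powr p) sums sy" "sy \<le> 1"
    using lp_normalized_sums[OF p x A] lp_normalized_sums[OF p y B] by metis
  define G where "G n = (A + B) powr p * (A / (A + B) * (cmod (x n) / A) powr p + B / (A + B) * (cmod (y n) / B) powr p)" for n
  have G_sums: "G sums ((A + B) powr p * (A / (A + B) * sx + B / (A + B) * sy))"
    unfolding G_def by (intro sums_mult sums_add sx(1) sy(1))
  have "(A + B) powr p * (A / (A + B) * sx + B / (A + B) * sy) \<le> (A + B) powr p * (A / (A + B) * 1 + B / (A + B) * 1)"
    using A B sx(2) sy(2) by (intro mult_left_mono add_mono) auto
  also have "\<dots> = (A + B) powr p"
    using A B by (simp add: add_divide_distrib[symmetric])
  finally have G_sum_le: "suminf G \<le> (A + B) powr p"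
    using G_sums by (simp add: sums_iff)
  have pointwise: "cmod (x n + y n) powr p \<le> G n" for n
  proof -
    have "cmod (x n + y n) powr p \<le> (cmod (x n) + cmod (y n)) powr p"
      using p by (intro powr_mono2 norm_triangle_ineq) auto
    also have "\<dots> \<le> G n"
      unfolding G_def using p A B by (intro powr_add_le_convex_combination) auto
    finally show ?thesis .
  qed
  have "summable G" using G_sums by (simp add: sums_iff)
  then have summable: "summable (\<lambda>n. cmod (x n + y n) powr p)"
    by (rule summable_comparison_test') (use pointwise in simp)
  then show "(\<lambda>k. x k + y k) \<in> lp_space p" by (simp add: lp_space_def)
  have "(\<Sum>n. cmod (x n + y n) powr p) \<le> (A + B) powr p"
    using suminf_le[OF pointwise summable \<open>summable G\<close>] G_sum_le by simp
  then have "lp_norm p (\<lambda>k. x k + y k) \<le> ((A + B) powr p) powr (1 / p)"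
    unfolding lp_norm_def using p summable by (intro powr_mono2 suminf_nonneg) auto
  also have "\<dots> = A + B" using A B p by (simp add: powr_powr)
  finally show "lp_norm p (\<lambda>k. x k + y k) \<le> A + B" .
qed

lemma lp_norm_triangle:
  assumes "1 \<le> p" "x \<in> lp_space p" "y \<in> lp_space p"
  shows "lp_norm p (\<lambda>k. x k + y k) \<le> lp_norm p x + lp_norm p y"
proof (rule field_le_epsilon)
  fix e :: real assume "0 < e"
  then have "lp_norm p (\<lambda>k. x k + y k) \<le> (lp_norm p x + e / 2) + (lp_norm p y + e / 2)"
    using lp_norm_nonneg[of p] by (intro lp_minkowski_bounds(2)[OF assms]) (auto intro: add_nonneg_pos)
  then show "lp_norm p (\<lambda>k. x k + y k) \<le> lp_norm p x + lp_norm p y + e" by simp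
qed

lemma lp_space_add: "1 \<le> p \<Longrightarrow> x \<in> lp_space p \<Longrightarrow> y \<in> lp_space p \<Longrightarrow> (\<lambda>k. x k + y k) \<in> lp_space p"
  using lp_norm_nonneg[of p x] lp_norm_nonneg[of p y]
  by (intro lp_minkowski_bounds(1)[of p x y "lp_norm p x + 1" "lp_norm p y + 1"]) auto

lemma lp_space_scale: "x \<in> lp_space p \<Longrightarrow> (\<lambda>k. a * x k) \<in> lp_space p"
  unfolding lp_space_def by (simp add: norm_mult powr_mult summable_mult)

lemma lp_norm_scale:
  assumes "1 \<le> p" "x \<in> lp_space p"
  shows "lp_norm p (\<lambda>k. a * x k) = cmod a * lp_norm p x"
proof -
  have "(\<Sum>n. cmod (a * x n) powr p) = cmod a powr p * (\<Sum>n. cmod (x n) powr p)"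
    using assms by (simp add: lp_space_def norm_mult powr_mult suminf_mult)
  then show ?thesis
    using assms suminf_nonneg[of "\<lambda>n. cmod (x n) powr p"]
    by (simp add: lp_norm_def lp_space_def powr_mult powr_powr)
qed

lemma lp_space_solid:
  assumes "1 \<le> p" "y \<in> lp_space p" "\<And>k. cmod (x k) \<le> cmod (y k)"
  shows "x \<in> lp_space p"
proof -
  have "summable (\<lambda>n. cmod (y n) powr p)" using assms(2) by (simp add: lp_space_def)
  then have "summable (\<lambda>n. cmod (x n) powr p)"
    by (rule summable_comparison_test') (use assms in \<open>simp add: powr_mono2\<close>)
  then show ?thesis by (simp add: lp_space_def)
qed

lemma lp_norm_mono:
  assumes "1 \<le> p" "y \<in> lp_space p" "\<And>k. cmod (x k) \<le> cmod (y k)"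
  shows "lp_norm p x \<le> lp_norm p y"
proof -
  have "summable (\<lambda>n. cmod (x n) powr p)" "summable (\<lambda>n. cmod (y n) powr p)"
    using assms lp_space_solid[OF assms] by (simp_all add: lp_space_def)
  then have "(\<Sum>n. cmod (x n) powr p) \<le> (\<Sum>n. cmod (y n) powr p)"
    by (intro suminf_le) (use assms in \<open>simp_all add: powr_mono2\<close>)
  then show ?thesis
    unfolding lp_norm_def using assms(1) \<open>summable (\<lambda>n. cmod (x n) powr p)\<close>
    by (intro powr_mono2 suminf_nonneg) auto
qed

lemma lp_space_tendsto_zero:
  assumes "1 \<le> p" "x \<in> lp_space p"
  shows "x \<longlonglongrightarrow> 0"
proof -
  have "(\<lambda>n. cmod (x n) powr p) \<longlonglongrightarrow> 0"
    using assms by (simp add: lp_space_def summable_LIMSEQ_zero)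
  then have "(\<lambda>n. (cmod (x n) powr p) powr (1 / p)) \<longlonglongrightarrow> 0"
    by (rule tendsto_zero_powrI[OF _ tendsto_const]) (use assms(1) in auto)
  moreover have "(cmod (x n) powr p) powr (1 / p) = cmod (x n)" for n
    using assms(1) by (simp add: powr_powr)
  ultimately have "(\<lambda>n. cmod (x n)) \<longlonglongrightarrow> 0" by simp
  then show ?thesis by (rule tendsto_norm_zero_cancel)
qed

lemma solid_sequence_space_lp:
  assumes p: "1 \<le> p"
  shows "solid_sequence_space (lp_space p) (lp_norm p)"
proof
  show "(\<lambda>k. 0) \<in> lp_space p" by (simp add: lp_space_def)
  show "(\<lambda>k. x k + y k) \<in> lp_space p" if "x \<in> lp_space p" "y \<in> lp_space p" for x y
    using p that by (rule lp_space_add)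
  show "(\<lambda>k. a * x k) \<in> lp_space p" if "x \<in> lp_space p" for a x
    using that by (rule lp_space_scale)
  show "x \<in> lp_space p" if "y \<in> lp_space p" "\<And>k. cmod (x k) \<le> cmod (y k)" for x y
    using p that by (rule lp_space_solid)
  show "lp_norm p x \<le> lp_norm p y" if "y \<in> lp_space p" "\<And>k. cmod (x k) \<le> cmod (y k)" for x y
    using p that by (rule lp_norm_mono)
  show "lp_norm p (\<lambda>k. x k + y k) \<le> lp_norm p x + lp_norm p y"
    if "x \<in> lp_space p" "y \<in> lp_space p" for x y
    using p that by (rule lp_norm_triangle)
  show "lp_norm p (\<lambda>k. a * x k) = cmod a * lp_norm p x" if "x \<in> lp_space p" for a x
    using p that by (rule lp_norm_scale)
qed

definition c0_norm :: "(nat \<Rightarrow> complex) \<Rightarrow> real" where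
  "c0_norm x = (SUP n. cmod (x n))"

lemma c0_dist_eq: "c0_dist x y = c0_norm (\<lambda>k. x k - y k)"
  by (simp add: c0_dist_def c0_norm_def)

lemma c0_space_bdd: "x \<in> c0_space \<Longrightarrow> bdd_above (range (\<lambda>n. cmod (x n)))"
  unfolding c0_space_def
  by (metis convergentI convergent_imp_Bseq Bseq_def bdd_aboveI2 mem_Collect_eq)

lemma c0_space_add: "x \<in> c0_space \<Longrightarrow> y \<in> c0_space \<Longrightarrow> (\<lambda>k. x k + y k) \<in> c0_space"
  unfolding c0_space_def using tendsto_add by fastforce

lemma c0_space_scale: "x \<in> c0_space \<Longrightarrow> (\<lambda>k. a * x k) \<in> c0_space"
  unfolding c0_space_def using tendsto_mult_right_zero by blast

lemma c0_space_solid: "y \<in> c0_space \<Longrightarrow> (\<And>k. cmod (x k) \<le> cmod (y k)) \<Longrightarrow> x \<in> c0_space"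
  unfolding c0_space_def
  by (simp add: Lim_null_comparison[of x "\<lambda>k. cmod (y k)"] tendsto_norm_zero)

lemma c0_norm_mono: "y \<in> c0_space \<Longrightarrow> (\<And>k. cmod (x k) \<le> cmod (y k)) \<Longrightarrow> c0_norm x \<le> c0_norm y"
  unfolding c0_norm_def by (intro cSUP_mono c0_space_bdd) auto

lemma c0_norm_triangle:
  assumes "x \<in> c0_space" "y \<in> c0_space"
  shows "c0_norm (\<lambda>k. x k + y k) \<le> c0_norm x + c0_norm y"
  unfolding c0_norm_def
proof (rule cSUP_least)
  fix n
  have "cmod (x n + y n) \<le> cmod (x n) + cmod (y n)" by (rule norm_triangle_ineq)
  also have "\<dots> \<le> (SUP n. cmod (x n)) + (SUP n. cmod (y n))"
    using assms by (intro add_mono cSUP_upper c0_space_bdd) auto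
  finally show "cmod (x n + y n) \<le> (SUP n. cmod (x n)) + (SUP n. cmod (y n))" .
qed simp

lemma c0_norm_scale:
  assumes "x \<in> c0_space"
  shows "c0_norm (\<lambda>k. a * x k) = cmod a * c0_norm x"
proof -
  have "cmod a * (SUP n. cmod (x n)) = (SUP n. cmod a * cmod (x n))"
    using c0_space_bdd[OF assms]
    by (subst continuous_at_Sup_mono) (auto intro!: continuous_intros simp: mono_def mult_left_mono image_image)
  then show ?thesis by (simp add: c0_norm_def norm_mult)
qed

lemma solid_sequence_space_c0: "solid_sequence_space c0_space c0_norm"
proof
  show "(\<lambda>k. 0) \<in> c0_space" by (simp add: c0_space_def)
  show "(\<lambda>k. x k + y k) \<in> c0_space" if "x \<in> c0_space" "y \<in> c0_space" for x y
    using that by (rule c0_space_add)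
  show "(\<lambda>k. a * x k) \<in> c0_space" if "x \<in> c0_space" for a x
    using that by (rule c0_space_scale)
  show "x \<in> c0_space" if "y \<in> c0_space" "\<And>k. cmod (x k) \<le> cmod (y k)" for x y
    using that by (rule c0_space_solid)
  show "c0_norm x \<le> c0_norm y" if "y \<in> c0_space" "\<And>k. cmod (x k) \<le> cmod (y k)" for x y
    using that by (rule c0_norm_mono)
  show "c0_norm (\<lambda>k. x k + y k) \<le> c0_norm x + c0_norm y" if "x \<in> c0_space" "y \<in> c0_space" for x y
    using that by (rule c0_norm_triangle)
  show "c0_norm (\<lambda>k. a * x k) = cmod a * c0_norm x" if "x \<in> c0_space" for a x
    using that by (rule c0_norm_scale)
qed

theorem corollary2p3:
  fixes X :: "(nat \<Rightarrow> complex) set" and d :: "(nat \<Rightarrow> complex) \<Rightarrow> (nat \<Rightarrow> complex) \<Rightarrow> real"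
    and x0 :: "nat \<Rightarrow> complex" and m N :: nat and c :: complex and \<alpha> :: "nat \<Rightarrow> complex"
  assumes space: "(\<exists>p::real. 1 \<le> p \<and> X = lp_space p \<and> d = lp_dist p) \<or> (X = c0_space \<and> d = c0_dist)"
    and x0X: "x0 \<in> X"
    and m: "m \<ge> 1"
    and c: "cmod c > 1"
    and fhc: "freq_hypercyclic X d (scaled_shift c) (\<lambda>k. x0 k ^ m)"
    and N: "N \<ge> m"
    and am: "\<alpha> m \<noteq> 0"
  shows "freq_hypercyclic X d (scaled_shift c) (\<lambda>k. \<Sum>\<nu>=m..N. \<alpha> \<nu> * x0 k ^ \<nu>)"
proof -
  obtain nrm where X: "solid_sequence_space X nrm" and d: "d = (\<lambda>x y. nrm (\<lambda>k. x k - y k))"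
    and x0: "x0 \<longlonglongrightarrow> 0"
    using space
  proof
    assume "\<exists>p::real. 1 \<le> p \<and> X = lp_space p \<and> d = lp_dist p"
    then obtain p :: real where "1 \<le> p" "X = lp_space p" "d = lp_dist p" by blast
    then show thesis
      using that[of "lp_norm p"] solid_sequence_space_lp lp_space_tendsto_zero x0X
      by (simp add: lp_dist_eq[abs_def])
  next
    assume "X = c0_space \<and> d = c0_dist"
    then show thesis
      using that[of c0_norm] solid_sequence_space_c0 x0X
      by (simp add: c0_dist_eq[abs_def] c0_space_def)
  qed
  show ?thesis
    unfolding d using X fhc[unfolded d] x0 N am by (rule solid_sequence_space.freq_hypercyclic_sum_powers)
qed

end
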